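(* Let $c=(h\leftarrow B)$ be a clause, and consider two priority derivation steps $a|K\xrightarrow{c}Q$ (1) and $a\tau\underline{\pi}|(K\tau\underline{\pi}+X)\xrightarrow{c}R$ (2), where $\tau$ is a substitution, $\underline\pi$ a shifting, $X$ a p-goal, and step (2) is a congruent lowering of step (1) by $X$. Then there exist a substitution $\delta$ and a shifting $\underline{\rho}$ such that $R/((a|K)\tau\underline{\pi})=Q\delta\underline{\rho}$; moreover $\delta$ is a renaming if $\tau$ is a renaming.
   Context: A p-atom is a pair $a[p]$ of an atom $a$ and a rational priority $p$. A p-goal is a finite set of p-atoms with pairwise distinct priorities, regarded as a list ordered by increasing priority. Substitutions act on atoms and leave priorities unchanged. A clause is $h\leftarrow B$ with $h$ an atom and $B$ a p-goal. For p-goals with no common priority, $F+G=F\cup G$; $F|G$ denotes $F+G$ when every priority of $F$ is smaller than every priority of $G$. A shifting $\underline{\pi}$ is a strictly increasing bijection $\mathbb{Q}\to\mathbb{Q}$; $G\underline{\pi}$ replaces each priority $p$ of $G$ by $\underline{\pi}(p)$. Priority derivation step: for a p-goal $a|F$ ($a$ of least priority), clause $c=(h\leftarrow B)$, renaming $\xi$ with $var(a|F)\cap var(c\xi)=\emptyset$, idempotent relevant mgu $\theta$ of $a$ and $h\xi$, and shifting $\underline{\pi}$ with $F$, $B\xi\underline{\pi}$ sharing no priority, $a|F\xrightarrow{c\xi,\theta}(F+B\xi\underline{\pi})\theta$. Lowering: given steps $a|K\xrightarrow{c}(K+B\xi'\underline{\theta}')\alpha'$ and $a\lambda\underline{\sigma}|(K\lambda\underline{\sigma}+X)\xrightarrow{c}(X+K\lambda\underline{\sigma}+B\xi''\underline{\theta}'')\alpha''$,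 the second is a lowering of the first by $X$; it is a congruent lowering by $X$ if some shifting $\underline{\rho}$ satisfies $K\underline{\rho}=K\underline{\sigma}$ and $B\underline{\theta}'\underline{\rho}=B\underline{\theta}''$. Sub-resolvent of a step: for a step $a|(F+G)\xrightarrow{c}Q=((F+G)+B\xi\underline{\pi})\alpha$, $Q/a=B\xi\underline{\pi}\alpha$, $Q/F=F\alpha$, and $Q/(a|F)=Q/a+Q/F$ (the p-atoms of $Q$ descending from $a|F$). In the claim, $R/((a|K)\tau\underline\pi)$ is thus the resolvent $R$ without the instantiated atoms of $X$. *)

theory Defs
  imports Complex_Main
begin

text \<open>Atoms are represented as first-order terms (a predicate symbol applied to
argument terms); function and predicate symbols share the type 'f.\<close>

datatype ('f, 'v) trm = Var 'v | Fn 'f "('f, 'v) trm list"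

type_synonym ('f, 'v) subst = "'v \<Rightarrow> ('f, 'v) trm"

fun subst_apply :: "('f, 'v) trm \<Rightarrow> ('f, 'v) subst \<Rightarrow> ('f, 'v) trm" (infixl "\<cdot>" 67) where
  "Var x \<cdot> \<sigma> = \<sigma> x"
| "Fn f ts \<cdot> \<sigma> = Fn f (map (\<lambda>t. t \<cdot> \<sigma>) ts)"

fun vars :: "('f, 'v) trm \<Rightarrow> 'v set" where
  "vars (Var x) = {x}"
| "vars (Fn f ts) = \<Union> (set (map vars ts))"

definition subst_comp :: "('f, 'v) subst \<Rightarrow> ('f, 'v) subst \<Rightarrow> ('f, 'v) subst" (infixl "\<circ>\<^sub>s" 75) where
  "\<sigma> \<circ>\<^sub>s \<theta> = (\<lambda>x. \<sigma> x \<cdot> \<theta>)"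

definition is_renaming :: "('f, 'v) subst \<Rightarrow> bool" where
  "is_renaming \<sigma> \<longleftrightarrow> (\<exists>f. bij f \<and> \<sigma> = (\<lambda>x. Var (f x)))"

definition subst_dom :: "('f, 'v) subst \<Rightarrow> 'v set" where
  "subst_dom \<sigma> = {x. \<sigma> x \<noteq> Var x}"

definition subst_range_vars :: "('f, 'v) subst \<Rightarrow> 'v set" where
  "subst_range_vars \<sigma> = (\<Union>x\<in>subst_dom \<sigma>. vars (\<sigma> x))"

definition unifier :: "('f, 'v) subst \<Rightarrow> ('f, 'v) trm \<Rightarrow> ('f, 'v) trm \<Rightarrow> bool" where
  "unifier \<sigma> s t \<longleftrightarrow> s \<cdot> \<sigma> = t \<cdot> \<sigma>"

definition is_mgu :: "('f, 'v) subst \<Rightarrow> ('f, 'v) trm \<Rightarrow> ('f, 'v) trm \<Rightarrow> bool" where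
  "is_mgu \<theta> s t \<longleftrightarrow> unifier \<theta> s t \<and> (\<forall>\<sigma>. unifier \<sigma> s t \<longrightarrow> (\<exists>\<gamma>. \<sigma> = \<theta> \<circ>\<^sub>s \<gamma>))"

definition idempotent :: "('f, 'v) subst \<Rightarrow> bool" where
  "idempotent \<theta> \<longleftrightarrow> \<theta> \<circ>\<^sub>s \<theta> = \<theta>"

definition relevant :: "('f, 'v) subst \<Rightarrow> ('f, 'v) trm \<Rightarrow> ('f, 'v) trm \<Rightarrow> bool" where
  "relevant \<theta> s t \<longleftrightarrow> subst_dom \<theta> \<union> subst_range_vars \<theta> \<subseteq> vars s \<union> vars t"

type_synonym ('f, 'v) patom = "('f, 'v) trm \<times> rat"
type_synonym ('f, 'v) pgoal = "('f, 'v) patom set"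
type_synonym ('f, 'v) clause = "('f, 'v) trm \<times> ('f, 'v) pgoal"

definition prios :: "('f, 'v) pgoal \<Rightarrow> rat set" where
  "prios G = snd ` G"

definition is_pgoal :: "('f, 'v) pgoal \<Rightarrow> bool" where
  "is_pgoal G \<longleftrightarrow> finite G \<and> inj_on snd G"

definition pg_subst :: "('f, 'v) subst \<Rightarrow> ('f, 'v) pgoal \<Rightarrow> ('f, 'v) pgoal" where
  "pg_subst \<sigma> G = (\<lambda>(a, p). (a \<cdot> \<sigma>, p)) ` G"

definition pg_shift :: "(rat \<Rightarrow> rat) \<Rightarrow> ('f, 'v) pgoal \<Rightarrow> ('f, 'v) pgoal" where
  "pg_shift \<pi> G = (\<lambda>(a, p). (a, \<pi> p)) ` G"

definition pg_vars :: "('f, 'v) pgoal \<Rightarrow> 'v set" where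
  "pg_vars G = (\<Union>ap\<in>G. vars (fst ap))"

definition shifting :: "(rat \<Rightarrow> rat) \<Rightarrow> bool" where
  "shifting \<pi> \<longleftrightarrow> strict_mono \<pi> \<and> bij \<pi>"

definition clause_subst :: "('f, 'v) subst \<Rightarrow> ('f, 'v) clause \<Rightarrow> ('f, 'v) clause" where
  "clause_subst \<xi> c = (fst c \<cdot> \<xi>, pg_subst \<xi> (snd c))"

definition clause_vars :: "('f, 'v) clause \<Rightarrow> 'v set" where
  "clause_vars c = vars (fst c) \<union> pg_vars (snd c)"

text \<open>pstep a p F c xi theta pi Q:  the p-goal a|F, where (a,p) is the p-atom of
least priority and F the rest, resolves with clause c (renamed by xi), using the
idempotent relevant mgu theta and the shifting pi, to the resolvent Q.\<close>
definition pstep ::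
  "('f, 'v) trm \<Rightarrow> rat \<Rightarrow> ('f, 'v) pgoal \<Rightarrow> ('f, 'v) clause \<Rightarrow> ('f, 'v) subst \<Rightarrow>
   ('f, 'v) subst \<Rightarrow> (rat \<Rightarrow> rat) \<Rightarrow> ('f, 'v) pgoal \<Rightarrow> bool" where
  "pstep a p F c \<xi> \<theta> \<pi> Q \<longleftrightarrow>
     is_pgoal F \<and> (\<forall>q\<in>prios F. p < q) \<and> is_pgoal (snd c) \<and>
     is_renaming \<xi> \<and>
     (vars a \<union> pg_vars F) \<inter> clause_vars (clause_subst \<xi> c) = {} \<and>
     idempotent \<theta> \<and> relevant \<theta> a (fst c \<cdot> \<xi>) \<and> is_mgu \<theta> a (fst c \<cdot> \<xi>) \<and>
     shifting \<pi> \<and> prios F \<inter> prios (pg_shift \<pi> (pg_subst \<xi> (snd c))) = {} \<and>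
     Q = pg_subst \<theta> (F \<union> pg_shift \<pi> (pg_subst \<xi> (snd c)))"

text \<open>Sub-resolvent Q/(a|F') = Q/a + Q/F' of a step with renaming xi, shifting pi,
mgu theta, for F' a part of the non-selected p-atoms.\<close>
definition subres ::
  "('f, 'v) clause \<Rightarrow> ('f, 'v) subst \<Rightarrow> (rat \<Rightarrow> rat) \<Rightarrow> ('f, 'v) subst \<Rightarrow>
   ('f, 'v) pgoal \<Rightarrow> ('f, 'v) pgoal" where
  "subres c \<xi> \<pi> \<theta> F' = pg_subst \<theta> (pg_shift \<pi> (pg_subst \<xi> (snd c))) \<union> pg_subst \<theta> F'"

text \<open>The step  a lam sigma | (K lam sigma + X) -> R  (with xi2, theta2, pi2) is a
lowering by X of the step  a|K -> Q  (with xi1, theta1, pi1).\<close>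
definition lowering where
  "lowering a p K c \<xi>1 \<theta>1 \<pi>1 Q lam \<sigma> X \<xi>2 \<theta>2 \<pi>2 R \<longleftrightarrow>
     pstep a p K c \<xi>1 \<theta>1 \<pi>1 Q \<and> shifting \<sigma> \<and> is_pgoal X \<and>
     prios (pg_shift \<sigma> (pg_subst lam K)) \<inter> prios X = {} \<and>
     pstep (a \<cdot> lam) (\<sigma> p) (pg_shift \<sigma> (pg_subst lam K) \<union> X) c \<xi>2 \<theta>2 \<pi>2 R"

definition congruent_lowering where
  "congruent_lowering a p K c \<xi>1 \<theta>1 \<pi>1 Q lam \<sigma> X \<xi>2 \<theta>2 \<pi>2 R \<longleftrightarrow>
     lowering a p K c \<xi>1 \<theta>1 \<pi>1 Q lam \<sigma> X \<xi>2 \<theta>2 \<pi>2 R \<and>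
     (\<exists>\<rho>. shifting \<rho> \<and> pg_shift \<rho> K = pg_shift \<sigma> K \<and>
          pg_shift \<rho> (pg_shift \<pi>1 (snd c)) = pg_shift \<pi>2 (snd c))"

end

theory Submission
  imports Defs "HOL-Combinatorics.Transposition"
begin

text \<open>Both steps resolve with the same clause, and the second sees the first through \<open>\<tau>\<close>:
the substitution \<open>\<eta>\<close> that acts as \<open>\<tau>\<close> on the variables of \<open>a|K\<close> and sends each
variable of the first clause variant to its counterpart in the second turns the first
unification problem into the second. So \<open>\<eta> \<circ>\<^sub>s \<alpha>2\<close> unifies the first problem and factors
through its mgu as \<open>\<alpha>1 \<circ>\<^sub>s \<delta>\<close>; this gives \<open>R/((a|K)\<tau>\<pi>) = Q\<delta>\<close> up to priorities, and the
congruence of the lowering provides the shifting \<open>\<rho>\<close> that matches them. If \<open>\<tau>\<close> is a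
renaming, then so is \<open>\<eta>\<close> on the finitely many relevant variables, because the second clause
variant is standardized apart from \<open>(a|K)\<tau>\<close>; then \<open>\<alpha>1\<close> and \<open>\<eta> \<circ>\<^sub>s \<alpha>2\<close> are two mgus of
one problem, hence variants of each other, and \<open>\<delta>\<close> can be taken to be a renaming.\<close>

lemma subst_apply_comp: "t \<cdot> (\<sigma> \<circ>\<^sub>s \<theta>) = t \<cdot> \<sigma> \<cdot> \<theta>"
  by (induction t) (auto simp: subst_comp_def)

lemma subst_comp_apply: "(\<sigma> \<circ>\<^sub>s \<theta>) x = \<sigma> x \<cdot> \<theta>"
  by (simp add: subst_comp_def)

lemma subst_comp_assoc: "(\<sigma> \<circ>\<^sub>s \<theta>) \<circ>\<^sub>s \<gamma> = \<sigma> \<circ>\<^sub>s (\<theta> \<circ>\<^sub>s \<gamma>)"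
  by (simp add: fun_eq_iff subst_comp_apply subst_apply_comp)

lemma subst_comp_Var_left [simp]: "Var \<circ>\<^sub>s \<sigma> = \<sigma>"
  by (simp add: subst_comp_def)

lemma subst_apply_cong: "(\<And>x. x \<in> vars t \<Longrightarrow> \<sigma> x = \<theta> x) \<Longrightarrow> t \<cdot> \<sigma> = t \<cdot> \<theta>"
  by (induction t) auto

lemma vars_subst_apply: "vars (t \<cdot> \<sigma>) = (\<Union>x\<in>vars t. vars (\<sigma> x))"
  by (induction t) auto

lemma finite_vars: "finite (vars t)"
  by (induction t) auto

lemma subst_apply_eq_self_imp_Var: "t \<cdot> \<sigma> = t \<Longrightarrow> x \<in> vars t \<Longrightarrow> \<sigma> x = Var x"
proof (induction t)
  case (Fn f ts)
  then obtain u where "u \<in> set ts" "x \<in> vars u" by auto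
  moreover from Fn.prems(1) have "map (\<lambda>t. t \<cdot> \<sigma>) ts = map id ts" by simp
  ultimately show ?case using Fn.IH by (metis map_eq_conv id_apply)
qed simp

definition renaming_on :: "'v set \<Rightarrow> ('f, 'v) subst \<Rightarrow> bool" where
  "renaming_on V \<sigma> \<longleftrightarrow> inj_on \<sigma> V \<and> \<sigma> ` V \<subseteq> range Var"

lemma renaming_on_cong:
  "(\<And>x. x \<in> V \<Longrightarrow> \<sigma> x = \<theta> x) \<Longrightarrow> renaming_on V \<sigma> \<longleftrightarrow> renaming_on V \<theta>"
  unfolding renaming_on_def by (metis image_cong inj_on_cong)

lemma is_renaming_imp_renaming_on: "is_renaming \<sigma> \<Longrightarrow> renaming_on V \<sigma>"
  unfolding is_renaming_def renaming_on_def by (auto intro: inj_onI dest: bij_is_inj injD)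

lemma renaming_on_Un:
  "renaming_on A \<sigma> \<Longrightarrow> renaming_on B \<sigma> \<Longrightarrow> \<sigma> ` A \<inter> \<sigma> ` B = {} \<Longrightarrow> renaming_on (A \<union> B) \<sigma>"
  unfolding renaming_on_def inj_on_Un by blast

lemma ex_bij_extending_inj_on:
  fixes g :: "'a \<Rightarrow> 'a"
  assumes "finite V" "inj_on g V"
  shows "\<exists>f. bij f \<and> (\<forall>x\<in>V. f x = g x)"
  using assms
proof (induction V rule: finite_induct)
  case empty
  show ?case using bij_id by blast
next
  case (insert x V)
  then obtain f where f: "bij f" "\<forall>v\<in>V. f v = g v" by auto
  have "(transpose (f x) (g x) \<circ> f) v = g v" if "v \<in> insert x V" for v
  proof (cases "v = x")
    case False
    with that have "v \<in> V" by simp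
    have "f v \<noteq> f x" using f(1) False by (metis bij_is_inj inj_eq)
    moreover have "g v \<noteq> g x"
      using insert.prems \<open>v \<in> V\<close> False by (metis DiffI image_eqI inj_on_insert singletonD)
    ultimately show ?thesis using f(2) \<open>v \<in> V\<close> by auto
  qed simp
  with f(1) show ?case by (metis bij_comp bij_transpose)
qed

lemma renaming_on_extend:
  assumes "finite V" "renaming_on V \<sigma>"
  obtains \<zeta> where "is_renaming \<zeta>" "\<And>x. x \<in> V \<Longrightarrow> \<zeta> x = \<sigma> x"
proof -
  define g where "g x = (THE y. \<sigma> x = Var y)" for x
  have \<sigma>_g: "\<sigma> x = Var (g x)" if "x \<in> V" for x
    using assms(2) that by (auto simp: renaming_on_def g_def)
  then have "inj_on g V"
    using assms(2) by (auto simp: renaming_on_def inj_on_def)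
  then obtain f where "bij f" "\<forall>x\<in>V. f x = g x"
    using ex_bij_extending_inj_on assms(1) by blast
  then show thesis
    by (intro that[of "\<lambda>x. Var (f x)"]) (auto simp: is_renaming_def \<sigma>_g)
qed

lemma renaming_on_if_inverse:
  "(\<And>y. y \<in> W \<Longrightarrow> \<gamma> y \<cdot> \<gamma>' = Var y) \<Longrightarrow> renaming_on W \<gamma>"
proof -
  assume inv: "\<And>y. y \<in> W \<Longrightarrow> \<gamma> y \<cdot> \<gamma>' = Var y"
  have "\<gamma> y \<in> range Var" if "y \<in> W" for y
    using inv[OF that] by (cases "\<gamma> y") auto
  moreover have "inj_on \<gamma> W"
    by (rule inj_on_inverseI[of _ "\<lambda>t. case t \<cdot> \<gamma>' of Var y \<Rightarrow> y"]) (simp add: inv)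
  ultimately show ?thesis by (auto simp: renaming_on_def)
qed

lemma is_renaming_right_inverse:
  assumes "is_renaming \<zeta>"
  obtains \<zeta>' where "\<zeta> \<circ>\<^sub>s \<zeta>' = Var"
proof -
  from assms obtain f where "bij f" "\<zeta> = (\<lambda>x. Var (f x))" by (auto simp: is_renaming_def)
  then show thesis
    by (intro that[of "\<lambda>x. Var (inv f x)"]) (auto simp: fun_eq_iff subst_comp_apply bij_is_inj)
qed

lemma is_mgu_renaming_comp:
  assumes "is_renaming \<zeta>" "is_mgu \<alpha> (s \<cdot> \<zeta>) (t \<cdot> \<zeta>)"
  shows "is_mgu (\<zeta> \<circ>\<^sub>s \<alpha>) s t"
  unfolding is_mgu_def
proof (intro conjI allI impI)
  show "unifier (\<zeta> \<circ>\<^sub>s \<alpha>) s t"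
    using assms(2) by (simp add: is_mgu_def unifier_def subst_apply_comp)
next
  fix \<sigma> assume "unifier \<sigma> s t"
  obtain \<zeta>' where inv: "\<zeta> \<circ>\<^sub>s \<zeta>' = Var" using is_renaming_right_inverse assms(1) .
  have "unifier (\<zeta>' \<circ>\<^sub>s \<sigma>) (s \<cdot> \<zeta>) (t \<cdot> \<zeta>)"
    using \<open>unifier \<sigma> s t\<close> inv
    by (simp add: unifier_def subst_apply_comp[symmetric] subst_comp_assoc[symmetric])
  then obtain \<gamma> where "\<zeta>' \<circ>\<^sub>s \<sigma> = \<alpha> \<circ>\<^sub>s \<gamma>" using assms(2) by (auto simp: is_mgu_def)
  then have "\<sigma> = (\<zeta> \<circ>\<^sub>s \<alpha>) \<circ>\<^sub>s \<gamma>"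
    by (metis inv subst_comp_Var_left subst_comp_assoc)
  then show "\<exists>\<gamma>. \<sigma> = (\<zeta> \<circ>\<^sub>s \<alpha>) \<circ>\<^sub>s \<gamma>" by blast
qed

lemma mgu_unique_up_to_renaming:
  assumes "finite V" "is_mgu \<theta> s t" "is_mgu \<theta>' s t"
  obtains \<delta> where "is_renaming \<delta>" "\<And>x. x \<in> V \<Longrightarrow> \<theta> x \<cdot> \<delta> = \<theta>' x"
proof -
  obtain \<gamma> \<gamma>' where \<gamma>: "\<theta>' = \<theta> \<circ>\<^sub>s \<gamma>" and \<gamma>': "\<theta> = \<theta>' \<circ>\<^sub>s \<gamma>'"
    using assms(2,3) by (metis is_mgu_def)
  define W where "W = (\<Union>x\<in>V. vars (\<theta> x))"
  have "\<gamma> y \<cdot> \<gamma>' = Var y" if "y \<in> W" for y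
  proof -
    from that obtain x where "y \<in> vars (\<theta> x)" by (auto simp: W_def)
    moreover have "\<theta> x \<cdot> (\<gamma> \<circ>\<^sub>s \<gamma>') = \<theta> x"
      using \<gamma> \<gamma>' by (metis subst_comp_apply subst_comp_assoc)
    ultimately show ?thesis
      using subst_apply_eq_self_imp_Var by (fastforce simp: subst_comp_apply)
  qed
  then have "renaming_on W \<gamma>" by (rule renaming_on_if_inverse)
  moreover have "finite W" using assms(1) by (simp add: W_def finite_vars)
  ultimately obtain \<delta> where "is_renaming \<delta>" "\<And>y. y \<in> W \<Longrightarrow> \<delta> y = \<gamma> y"
    using renaming_on_extend by blast
  moreover have "\<theta> x \<cdot> \<delta> = \<theta>' x" if "x \<in> V" for x
    using that calculation(2) \<gamma>
    by (auto simp: W_def subst_comp_apply intro: subst_apply_cong)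
  ultimately show thesis using that by blast
qed

lemma mgu_instance_factor:
  assumes "finite V" "vars s \<union> vars t \<subseteq> V"
    and "is_mgu \<alpha> s t" "is_mgu \<alpha>' (s \<cdot> \<eta>) (t \<cdot> \<eta>)"
  obtains \<delta> where "\<And>x. x \<in> V \<Longrightarrow> \<alpha> x \<cdot> \<delta> = \<eta> x \<cdot> \<alpha>'"
    and "renaming_on V \<eta> \<Longrightarrow> is_renaming \<delta>"
proof (cases "renaming_on V \<eta>")
  case True
  then obtain \<zeta> where \<zeta>: "is_renaming \<zeta>" "\<And>x. x \<in> V \<Longrightarrow> \<zeta> x = \<eta> x"
    using renaming_on_extend assms(1) by blast
  have "s \<cdot> \<zeta> = s \<cdot> \<eta>" "t \<cdot> \<zeta> = t \<cdot> \<eta>"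
    using assms(2) \<zeta>(2) by (auto intro: subst_apply_cong)
  with assms(4) \<zeta>(1) have "is_mgu (\<zeta> \<circ>\<^sub>s \<alpha>') s t"
    by (intro is_mgu_renaming_comp) simp_all
  with assms(1,3) obtain \<delta> where "is_renaming \<delta>" "\<And>x. x \<in> V \<Longrightarrow> \<alpha> x \<cdot> \<delta> = \<zeta> x \<cdot> \<alpha>'"
    by (metis mgu_unique_up_to_renaming subst_comp_apply)
  with that \<zeta>(2) show thesis by auto
next
  case False
  have "unifier (\<eta> \<circ>\<^sub>s \<alpha>') s t"
    using assms(4) by (simp add: is_mgu_def unifier_def subst_apply_comp)
  then obtain \<gamma> where "\<eta> \<circ>\<^sub>s \<alpha>' = \<alpha> \<circ>\<^sub>s \<gamma>" using assms(3) by (auto simp: is_mgu_def)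
  with that False show thesis by (metis subst_comp_apply)
qed

lemma pg_subst_shift_commute: "pg_subst \<sigma> (pg_shift \<pi> A) = pg_shift \<pi> (pg_subst \<sigma> A)"
  unfolding pg_shift_def pg_subst_def image_image by (simp add: case_prod_beta)

lemma pg_subst_pg_subst: "pg_subst \<sigma> (pg_subst \<theta> A) = pg_subst (\<theta> \<circ>\<^sub>s \<sigma>) A"
  unfolding pg_subst_def image_image by (simp add: case_prod_beta subst_apply_comp)

lemma pg_subst_Un: "pg_subst \<sigma> (A \<union> B) = pg_subst \<sigma> A \<union> pg_subst \<sigma> B"
  unfolding pg_subst_def by (rule image_Un)

lemma pg_shift_Un: "pg_shift \<pi> (A \<union> B) = pg_shift \<pi> A \<union> pg_shift \<pi> B"
  unfolding pg_shift_def by (rule image_Un)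

lemma pg_subst_cong:
  "(\<And>b q. (b, q) \<in> A \<Longrightarrow> b \<cdot> \<sigma> = b \<cdot> \<theta>) \<Longrightarrow> pg_subst \<sigma> A = pg_subst \<theta> A"
  unfolding pg_subst_def by (rule image_cong) auto

lemma pg_vars_subst: "pg_vars (pg_subst \<sigma> A) = (\<Union>x\<in>pg_vars A. vars (\<sigma> x))"
  unfolding pg_vars_def pg_subst_def by (force simp: vars_subst_apply)

lemma finite_pg_vars: "finite A \<Longrightarrow> finite (pg_vars A)"
  unfolding pg_vars_def by (auto simp: finite_vars)

lemma clause_vars_subst: "clause_vars (clause_subst \<sigma> c) = (\<Union>x\<in>clause_vars c. vars (\<sigma> x))"
  unfolding clause_vars_def clause_subst_def by (simp add: vars_subst_apply pg_vars_subst)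

lemma ex_subst_on_renamed_apart:
  assumes "is_renaming \<xi>1" "is_renaming \<xi>2"
    and apart1: "V \<inter> (\<Union>y\<in>W. vars (\<xi>1 y)) = {}"
    and apart2: "(\<Union>x\<in>V. vars (\<tau> x)) \<inter> (\<Union>y\<in>W. vars (\<xi>2 y)) = {}"
  obtains \<eta> where "\<And>x. x \<in> V \<Longrightarrow> \<eta> x = \<tau> x" and "\<And>y. y \<in> W \<Longrightarrow> \<xi>1 y \<cdot> \<eta> = \<xi>2 y"
    and "is_renaming \<tau> \<Longrightarrow> renaming_on (V \<union> (\<Union>y\<in>W. vars (\<xi>1 y))) \<eta>"
proof -
  obtain f1 where f1: "bij f1" "\<xi>1 = (\<lambda>x. Var (f1 x))"
    using assms(1) by (auto simp: is_renaming_def)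
  have f1W: "(\<Union>y\<in>W. vars (\<xi>1 y)) = f1 ` W" by (auto simp: f1(2))
  define \<eta> where "\<eta> x = (if x \<in> V then \<tau> x else \<xi>2 (inv f1 x))" for x
  have \<eta>_V: "\<eta> x = \<tau> x" if "x \<in> V" for x
    using that by (simp add: \<eta>_def)
  have \<eta>_f1: "\<eta> (f1 y) = \<xi>2 y" if "y \<in> W" for y
    using that apart1 f1(1) by (auto simp: \<eta>_def f1W bij_is_inj)
  have "renaming_on (V \<union> f1 ` W) \<eta>" if "is_renaming \<tau>"
  proof (rule renaming_on_Un)
    show "renaming_on V \<eta>"
      using renaming_on_cong[of V \<eta> \<tau>] \<eta>_V is_renaming_imp_renaming_on[OF that(1)] by blast
    have "renaming_on W (\<eta> \<circ> f1)"
      using renaming_on_cong[of W "\<eta> \<circ> f1" \<xi>2] \<eta>_f1 is_renaming_imp_renaming_on[OF assms(2)]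
      by simp
    then show "renaming_on (f1 ` W) \<eta>"
      by (auto simp: renaming_on_def inj_on_imageI)
    have "\<tau> x \<noteq> \<xi>2 y" if "x \<in> V" "y \<in> W" for x y
    proof -
      obtain z where "\<xi>2 y = Var z"
        using assms(2) by (auto simp: is_renaming_def)
      then show ?thesis using apart2 that by force
    qed
    then show "\<eta> ` V \<inter> \<eta> ` f1 ` W = {}"
      using \<eta>_V \<eta>_f1 by fastforce
  qed
  then show thesis
  proof (intro that)
    show "\<xi>1 y \<cdot> \<eta> = \<xi>2 y" if "y \<in> W" for y
      using \<eta>_f1 that by (simp add: f1(2))
  qed (simp_all add: \<eta>_V f1W)
qed

lemma mgu_factor_through_variant:
  assumes "finite V1" "finite CV" "is_renaming \<xi>1" "is_renaming \<xi>2"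
    and apart1: "V1 \<inter> (\<Union>y\<in>CV. vars (\<xi>1 y)) = {}"
    and apart2: "(\<Union>x\<in>V1. vars (\<tau> x)) \<inter> (\<Union>y\<in>CV. vars (\<xi>2 y)) = {}"
    and "vars a \<subseteq> V1" "vars h \<subseteq> CV"
    and mgu1: "is_mgu \<alpha>1 a (h \<cdot> \<xi>1)" and mgu2: "is_mgu \<alpha>2 (a \<cdot> \<tau>) (h \<cdot> \<xi>2)"
  obtains \<delta> where "\<And>t. vars t \<subseteq> V1 \<Longrightarrow> t \<cdot> \<alpha>1 \<cdot> \<delta> = t \<cdot> \<tau> \<cdot> \<alpha>2"
    and "\<And>t. vars t \<subseteq> CV \<Longrightarrow> t \<cdot> \<xi>1 \<cdot> \<alpha>1 \<cdot> \<delta> = t \<cdot> \<xi>2 \<cdot> \<alpha>2"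
    and "is_renaming \<tau> \<Longrightarrow> is_renaming \<delta>"
proof -
  define V2 where "V2 = (\<Union>y\<in>CV. vars (\<xi>1 y))"
  obtain \<eta> where \<eta>_V1: "\<And>x. x \<in> V1 \<Longrightarrow> \<eta> x = \<tau> x"
    and \<eta>_CV: "\<And>y. y \<in> CV \<Longrightarrow> \<xi>1 y \<cdot> \<eta> = \<xi>2 y"
    and \<eta>_renaming: "is_renaming \<tau> \<Longrightarrow> renaming_on (V1 \<union> V2) \<eta>"
    using ex_subst_on_renamed_apart[OF assms(3,4) apart1 apart2] unfolding V2_def by blast
  have on_V1: "t \<cdot> \<eta> = t \<cdot> \<tau>" if "vars t \<subseteq> V1" for t
    using that \<eta>_V1 by (auto intro: subst_apply_cong)
  have on_CV: "t \<cdot> \<xi>1 \<cdot> \<eta> = t \<cdot> \<xi>2" if "vars t \<subseteq> CV" for t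
  proof -
    have "t \<cdot> (\<xi>1 \<circ>\<^sub>s \<eta>) = t \<cdot> \<xi>2"
      by (rule subst_apply_cong) (use that \<eta>_CV in \<open>auto simp: subst_comp_apply\<close>)
    then show ?thesis by (simp add: subst_apply_comp)
  qed
  have in_V2: "vars (t \<cdot> \<xi>1) \<subseteq> V2" if "vars t \<subseteq> CV" for t
    using that by (auto simp: V2_def vars_subst_apply)
  have fin: "finite (V1 \<union> V2)"
    using assms(1,2) by (simp add: V2_def finite_vars)
  have in_V: "vars a \<union> vars (h \<cdot> \<xi>1) \<subseteq> V1 \<union> V2"
    using assms(7) in_V2[OF assms(8)] by blast
  have mgu2': "is_mgu \<alpha>2 (a \<cdot> \<eta>) (h \<cdot> \<xi>1 \<cdot> \<eta>)"
    using mgu2 on_V1[OF assms(7)] on_CV[OF assms(8)] by simp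
  obtain \<delta> where \<delta>: "\<And>x. x \<in> V1 \<union> V2 \<Longrightarrow> \<alpha>1 x \<cdot> \<delta> = \<eta> x \<cdot> \<alpha>2"
    and \<delta>_renaming: "renaming_on (V1 \<union> V2) \<eta> \<Longrightarrow> is_renaming \<delta>"
    using mgu_instance_factor[OF fin in_V mgu1 mgu2'] by blast
  have factor: "t \<cdot> \<alpha>1 \<cdot> \<delta> = t \<cdot> \<eta> \<cdot> \<alpha>2" if "vars t \<subseteq> V1 \<union> V2" for t
  proof -
    have "t \<cdot> (\<alpha>1 \<circ>\<^sub>s \<delta>) = t \<cdot> (\<eta> \<circ>\<^sub>s \<alpha>2)"
      by (rule subst_apply_cong) (use that \<delta> in \<open>auto simp: subst_comp_apply\<close>)
    then show ?thesis by (simp add: subst_apply_comp)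
  qed
  show thesis
  proof (rule that)
    show "t \<cdot> \<alpha>1 \<cdot> \<delta> = t \<cdot> \<tau> \<cdot> \<alpha>2" if "vars t \<subseteq> V1" for t
      using factor[OF le_supI1[OF that]] on_V1[OF that] by simp
    show "t \<cdot> \<xi>1 \<cdot> \<alpha>1 \<cdot> \<delta> = t \<cdot> \<xi>2 \<cdot> \<alpha>2" if "vars t \<subseteq> CV" for t
      using factor[OF le_supI2[OF in_V2[OF that]]] on_CV[OF that] by simp
  qed (use \<eta>_renaming \<delta>_renaming in blast)
qed

lemma lowered_pstep_mgu_factor:
  assumes st1: "pstep a p K c \<xi>1 \<alpha>1 \<pi>1 Q"
    and st2: "pstep (a \<cdot> \<tau>) p' F c \<xi>2 \<alpha>2 \<pi>2 R"
    and KF: "pg_vars (pg_subst \<tau> K) \<subseteq> pg_vars F"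
  obtains \<delta> where "pg_subst (\<alpha>1 \<circ>\<^sub>s \<delta>) K = pg_subst (\<tau> \<circ>\<^sub>s \<alpha>2) K"
    and "pg_subst (\<xi>1 \<circ>\<^sub>s (\<alpha>1 \<circ>\<^sub>s \<delta>)) (snd c) = pg_subst (\<xi>2 \<circ>\<^sub>s \<alpha>2) (snd c)"
    and "is_renaming \<tau> \<Longrightarrow> is_renaming \<delta>"
proof -
  obtain h B where c: "c = (h, B)" by (cases c)
  define V1 where "V1 = vars a \<union> pg_vars K"
  define CV where "CV = clause_vars c"
  from st1 have "finite K" "finite B" and ren1: "is_renaming \<xi>1"
    and apart1: "V1 \<inter> (\<Union>y\<in>CV. vars (\<xi>1 y)) = {}" and mgu1: "is_mgu \<alpha>1 a (h \<cdot> \<xi>1)"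
    unfolding pstep_def is_pgoal_def by (auto simp: c V1_def CV_def clause_vars_subst)
  then have fin: "finite V1" "finite CV"
    by (simp_all add: V1_def CV_def c clause_vars_def finite_vars finite_pg_vars)
  from st2 KF have ren2: "is_renaming \<xi>2"
    and apart2: "(\<Union>x\<in>V1. vars (\<tau> x)) \<inter> (\<Union>y\<in>CV. vars (\<xi>2 y)) = {}"
    and mgu2: "is_mgu \<alpha>2 (a \<cdot> \<tau>) (h \<cdot> \<xi>2)"
    unfolding pstep_def
    by (auto simp: c V1_def CV_def clause_vars_subst vars_subst_apply pg_vars_subst)
  have "vars a \<subseteq> V1" "vars h \<subseteq> CV"
    by (simp_all add: V1_def CV_def c clause_vars_def)
  then obtain \<delta> where on_V1: "\<And>t. vars t \<subseteq> V1 \<Longrightarrow> t \<cdot> \<alpha>1 \<cdot> \<delta> = t \<cdot> \<tau> \<cdot> \<alpha>2"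
    and on_CV: "\<And>t. vars t \<subseteq> CV \<Longrightarrow> t \<cdot> \<xi>1 \<cdot> \<alpha>1 \<cdot> \<delta> = t \<cdot> \<xi>2 \<cdot> \<alpha>2"
    and "is_renaming \<tau> \<Longrightarrow> is_renaming \<delta>"
    using mgu_factor_through_variant[OF fin ren1 ren2 apart1 apart2 _ _ mgu1 mgu2] by blast
  moreover have "pg_subst (\<alpha>1 \<circ>\<^sub>s \<delta>) K = pg_subst (\<tau> \<circ>\<^sub>s \<alpha>2) K"
  proof (rule pg_subst_cong)
    fix b q assume "(b, q) \<in> K"
    then have "vars b \<subseteq> V1" by (force simp: V1_def pg_vars_def)
    then show "b \<cdot> (\<alpha>1 \<circ>\<^sub>s \<delta>) = b \<cdot> (\<tau> \<circ>\<^sub>s \<alpha>2)" by (simp add: subst_apply_comp on_V1)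
  qed
  moreover have "pg_subst (\<xi>1 \<circ>\<^sub>s (\<alpha>1 \<circ>\<^sub>s \<delta>)) (snd c) = pg_subst (\<xi>2 \<circ>\<^sub>s \<alpha>2) (snd c)"
  proof (rule pg_subst_cong)
    fix b q assume "(b, q) \<in> snd c"
    then have "vars b \<subseteq> CV" by (force simp: CV_def clause_vars_def pg_vars_def)
    then show "b \<cdot> (\<xi>1 \<circ>\<^sub>s (\<alpha>1 \<circ>\<^sub>s \<delta>)) = b \<cdot> (\<xi>2 \<circ>\<^sub>s \<alpha>2)"
      by (simp add: subst_apply_comp on_CV)
  qed
  ultimately show thesis using that by blast
qed

theorem mainTheorem5:
  fixes a :: "('f, 'v) trm" and p :: rat and K X Q R :: "('f, 'v) pgoal"
    and c :: "('f, 'v) clause" and \<tau> \<xi>1 \<alpha>1 \<xi>2 \<alpha>2 :: "('f, 'v) subst"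
    and \<pi> \<pi>1 \<pi>2 :: "rat \<Rightarrow> rat"
  assumes "infinite (UNIV :: 'v set)"
    and "congruent_lowering a p K c \<xi>1 \<alpha>1 \<pi>1 Q \<tau> \<pi> X \<xi>2 \<alpha>2 \<pi>2 R"
  shows "\<exists>\<delta> \<rho>. shifting \<rho> \<and>
           subres c \<xi>2 \<pi>2 \<alpha>2 (pg_shift \<pi> (pg_subst \<tau> K)) = pg_shift \<rho> (pg_subst \<delta> Q) \<and>
           (is_renaming \<tau> \<longrightarrow> is_renaming \<delta>)"
proof -
  from assms(2) obtain \<rho> where
      st1: "pstep a p K c \<xi>1 \<alpha>1 \<pi>1 Q" and
      st2: "pstep (a \<cdot> \<tau>) (\<pi> p) (pg_shift \<pi> (pg_subst \<tau> K) \<union> X) c \<xi>2 \<alpha>2 \<pi>2 R" and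
      \<rho>: "shifting \<rho>" "pg_shift \<rho> K = pg_shift \<pi> K"
        "pg_shift \<rho> (pg_shift \<pi>1 (snd c)) = pg_shift \<pi>2 (snd c)"
    unfolding congruent_lowering_def lowering_def by blast
  have "pg_vars (pg_subst \<tau> K) \<subseteq> pg_vars (pg_shift \<pi> (pg_subst \<tau> K) \<union> X)"
    by (force simp: pg_vars_def pg_shift_def)
  then obtain \<delta> where \<delta>K: "pg_subst (\<alpha>1 \<circ>\<^sub>s \<delta>) K = pg_subst (\<tau> \<circ>\<^sub>s \<alpha>2) K"
    and \<delta>B: "pg_subst (\<xi>1 \<circ>\<^sub>s (\<alpha>1 \<circ>\<^sub>s \<delta>)) (snd c) = pg_subst (\<xi>2 \<circ>\<^sub>s \<alpha>2) (snd c)"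
    and \<delta>_renaming: "is_renaming \<tau> \<Longrightarrow> is_renaming \<delta>"
    using lowered_pstep_mgu_factor[OF st1 st2] by blast
  have "pg_shift \<rho> (pg_subst \<delta> Q) =
      pg_subst (\<alpha>1 \<circ>\<^sub>s \<delta>) (pg_shift \<rho> K) \<union>
      pg_subst (\<xi>1 \<circ>\<^sub>s (\<alpha>1 \<circ>\<^sub>s \<delta>)) (pg_shift \<rho> (pg_shift \<pi>1 (snd c)))"
    using st1 unfolding pstep_def
    by (simp add: pg_subst_Un pg_shift_Un pg_subst_pg_subst pg_subst_shift_commute subst_comp_assoc)
  also have "\<dots> = pg_shift \<pi> (pg_subst (\<tau> \<circ>\<^sub>s \<alpha>2) K) \<union> pg_shift \<pi>2 (pg_subst (\<xi>2 \<circ>\<^sub>s \<alpha>2) (snd c))"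
    by (simp add: \<rho> pg_subst_shift_commute \<delta>K \<delta>B)
  also have "\<dots> = subres c \<xi>2 \<pi>2 \<alpha>2 (pg_shift \<pi> (pg_subst \<tau> K))"
    by (simp add: subres_def pg_subst_pg_subst pg_subst_shift_commute Un_commute)
  finally show ?thesis using \<rho>(1) \<delta>_renaming by metis
qed

end
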